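(* Let $A,B\in\mathbb{C}^{n\times n}$ be Hermitian positive semidefinite matrices. For any integers $k,h\ge1$ with $kh+1\le n$, \[ \lambda_{kh+1}(A\circ B)\le\lambda_1(B)\,\mathrm{Tr}(A_{>k})+\lambda_1(A)\,\mathrm{Tr}(B_{>h})+\mathrm{Tr}(A_{>k})\,\mathrm{Tr}(B_{>h}), \] where $\mathrm{Tr}(M_{>r}):=\sum_{j=r+1}^{n}\lambda_j(M)$.
   Context: For a Hermitian matrix $M$, $\lambda_1(M)\ge\lambda_2(M)\ge\dots\ge\lambda_n(M)$ denote its eigenvalues in decreasing order. $A\circ B$ denotes the entrywise (Hadamard) product. *)

theory Defs
  imports "Jordan_Normal_Form.Schur_Decomposition" "HOL-Computational_Algebra.Fundamental_Theorem_Algebra"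
begin

definition hermitian :: "complex mat \<Rightarrow> bool" where
  "hermitian A \<longleftrightarrow> A \<in> carrier_mat (dim_row A) (dim_row A) \<and> mat_adjoint A = A"

definition psd :: "complex mat \<Rightarrow> bool" where
  "psd A \<longleftrightarrow> hermitian A \<and>
     (\<forall>x \<in> carrier_vec (dim_row A). Re (\<Sum>i<dim_row A. cnj (x $ i) * (A *\<^sub>v x) $ i) \<ge> 0)"

definition eigvals_desc :: "complex mat \<Rightarrow> real list" where
  "eigvals_desc M = rev (sorted_list_of_multiset (image_mset Re (proots (char_poly M))))"

(* lambda j M, 1-indexed: lambda_1 \<ge> lambda_2 \<ge> ... \<ge> lambda_n *)
definition eig :: "nat \<Rightarrow> complex mat \<Rightarrow> real" where
  "eig j M = eigvals_desc M ! (j - 1)"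

definition tail_trace :: "nat \<Rightarrow> complex mat \<Rightarrow> real" where
  "tail_trace r M = (\<Sum>j = r + 1..dim_row M. eig j M)"

definition hadamard :: "complex mat \<Rightarrow> complex mat \<Rightarrow> complex mat" where
  "hadamard A B = mat (dim_row A) (dim_col A) (\<lambda>(i, j). A $$ (i, j) * B $$ (i, j))"

end

theory Submission
  imports Defs
begin

(* Write A = sum_i a_i u_i u_i^* and B = sum_j b_j v_j v_j^* with orthonormal eigenvectors and
   decreasing eigenvalues. Then x^* (A o B) x = sum_{i,j} a_i b_j |<u_i o v_j, x>|^2.
   Some nonzero x in the span of the top kh+1 eigenvectors of A o B is orthogonal to the kh
   vectors u_i o v_j with i < k, j < h, and x^* (A o B) x >= lambda_{kh+1}(A o B) |x|^2.
   Every remaining term has j >= h or i >= k; by Parseval for U,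
   sum_i |<u_i o v_j, x>|^2 = sum_q |v_j(q)|^2 |x_q|^2 <= |x|^2, and symmetrically for V, so
   these terms add up to at most (lambda_1(A) Tr(B_{>h}) + lambda_1(B) Tr(A_{>k})) |x|^2. *)

section \<open>Unitary matrices\<close>

lemma mat_adjoint_dim [simp]:
  "dim_row (mat_adjoint A) = dim_col A" "dim_col (mat_adjoint A) = dim_row A"
  unfolding mat_adjoint_def by (auto simp: mat_of_rows_def)

lemma index_mat_adjoint [simp]:
  "i < dim_col A \<Longrightarrow> j < dim_row A \<Longrightarrow> mat_adjoint (A :: complex mat) $$ (i, j) = cnj (A $$ (j, i))"
  unfolding mat_adjoint_def by (auto simp: mat_of_rows_def)

lemma mat_adjoint_carrier [simp]: "A \<in> carrier_mat n m \<Longrightarrow> mat_adjoint A \<in> carrier_mat m n"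
  unfolding carrier_mat_def by simp

lemma mat_adjoint_mat_adjoint [simp]: "mat_adjoint (mat_adjoint (A :: complex mat)) = A"
  by (rule eq_matI) simp_all

lemma mat_adjoint_mult:
  assumes "(A :: complex mat) \<in> carrier_mat n m" "B \<in> carrier_mat m p"
  shows "mat_adjoint (A * B) = mat_adjoint B * mat_adjoint A"
proof (rule eq_matI)
  fix i j assume "i < dim_row (mat_adjoint B * mat_adjoint A)" "j < dim_col (mat_adjoint B * mat_adjoint A)"
  then have i: "i < p" and j: "j < n" using assms by auto
  have "mat_adjoint (A * B) $$ (i, j) = cnj (\<Sum>k<m. A $$ (j, k) * B $$ (k, i))"
    using assms i j by (simp add: scalar_prod_def atLeast0LessThan)
  also have "\<dots> = (\<Sum>k<m. cnj (B $$ (k, i)) * cnj (A $$ (j, k)))"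
    by (simp add: mult.commute)
  also have "\<dots> = (mat_adjoint B * mat_adjoint A) $$ (i, j)"
    using assms i j by (simp add: scalar_prod_def atLeast0LessThan)
  finally show "mat_adjoint (A * B) $$ (i, j) = (mat_adjoint B * mat_adjoint A) $$ (i, j)" .
qed (use assms in auto)

lemma mat_adjoint_congruence:
  fixes A U :: "complex mat"
  assumes A: "A \<in> carrier_mat n n" "mat_adjoint A = A" and U: "U \<in> carrier_mat n m"
  shows "mat_adjoint (mat_adjoint U * A * U) = mat_adjoint U * A * U"
proof -
  have "mat_adjoint (mat_adjoint U * A * U) = mat_adjoint U * mat_adjoint (mat_adjoint U * A)"
    by (rule mat_adjoint_mult[of _ m n]) (use A U in auto)
  also have "mat_adjoint (mat_adjoint U * A) = A * U"
    using A U mat_adjoint_mult[of "mat_adjoint U" m n A n] by simp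
  finally show ?thesis using A U by (simp add: assoc_mult_mat[of _ m n _ n _ m])
qed

lemma mat_adjoint_four_block_one:
  assumes "U \<in> carrier_mat m m"
  shows "mat_adjoint (four_block_mat (1\<^sub>m 1) (0\<^sub>m 1 m) (0\<^sub>m m 1) (U :: complex mat))
    = four_block_mat (1\<^sub>m 1) (0\<^sub>m 1 m) (0\<^sub>m m 1) (mat_adjoint U)"
  by (rule eq_matI) (use assms in auto)

definition cinner :: "nat \<Rightarrow> (nat \<Rightarrow> complex) \<Rightarrow> (nat \<Rightarrow> complex) \<Rightarrow> complex" where
  "cinner n f x = (\<Sum>q<n. cnj (f q) * x q)"

definition unitary :: "nat \<Rightarrow> complex mat \<Rightarrow> bool" where
  "unitary n U \<longleftrightarrow> U \<in> carrier_mat n n \<and> mat_adjoint U * U = 1\<^sub>m n"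

lemma unitary_carrier: "unitary n U \<Longrightarrow> U \<in> carrier_mat n n"
  unfolding unitary_def by simp

lemma unitary_mult_adjoint: "unitary n U \<Longrightarrow> U * mat_adjoint U = 1\<^sub>m n"
  unfolding unitary_def by (auto intro: mat_mult_left_right_inverse)

lemma unitary_mult:
  assumes U: "unitary n U" and V: "unitary n V"
  shows "unitary n (U * V)"
proof -
  have U': "U \<in> carrier_mat n n" and V': "V \<in> carrier_mat n n"
    using U V by (simp_all add: unitary_carrier)
  have "mat_adjoint (U * V) * (U * V) = mat_adjoint V * ((mat_adjoint U * U) * V)"
    using U' V' by (simp add: mat_adjoint_mult[OF U' V'] assoc_mult_mat[of _ n n _ n _ n])
  also have "\<dots> = 1\<^sub>m n" using U V V' unfolding unitary_def by simp
  finally show ?thesis using U' V' unfolding unitary_def by simp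
qed

lemma unitary_four_block_one:
  assumes "unitary m U"
  shows "unitary (Suc m) (four_block_mat (1\<^sub>m 1) (0\<^sub>m 1 m) (0\<^sub>m m 1) U)"
proof -
  have U: "U \<in> carrier_mat m m" using assms by (rule unitary_carrier)
  show ?thesis
    using assms U unfolding unitary_def mat_adjoint_four_block_one[OF U]
    by (subst mult_four_block_mat[of _ 1 1 _ m _ m]) auto
qed

lemma unitary_cols_orthonormal:
  assumes "unitary n U" "i < n" "j < n"
  shows "cinner n (\<lambda>p. U $$ (p, i)) (\<lambda>p. U $$ (p, j)) = (if i = j then 1 else 0)"
proof -
  have U: "U \<in> carrier_mat n n" using assms(1) by (rule unitary_carrier)
  have "cinner n (\<lambda>p. U $$ (p, i)) (\<lambda>p. U $$ (p, j)) = (mat_adjoint U * U) $$ (i, j)"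
    using U assms(2,3) by (simp add: cinner_def scalar_prod_def atLeast0LessThan)
  then show ?thesis using assms by (simp add: unitary_def)
qed

lemma unitary_rows_orthonormal:
  assumes "unitary n U" "p < n" "q < n"
  shows "(\<Sum>i<n. U $$ (p, i) * cnj (U $$ (q, i))) = (if p = q then 1 else 0)"
proof -
  have U: "U \<in> carrier_mat n n" using assms(1) by (rule unitary_carrier)
  have "(\<Sum>i<n. U $$ (p, i) * cnj (U $$ (q, i))) = (U * mat_adjoint U) $$ (p, q)"
    using U assms(2,3) by (simp add: scalar_prod_def atLeast0LessThan)
  then show ?thesis using assms by (simp add: unitary_mult_adjoint)
qed

lemma cscalar_prod_self: "(v :: complex vec) \<bullet>c v = of_real (\<Sum>i<dim_vec v. (cmod (v $ i))\<^sup>2)"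
proof -
  have "\<And>z. z * cnj z = complex_of_real ((cmod z)\<^sup>2)" by (simp only: complex_norm_square)
  then show ?thesis unfolding scalar_prod_def of_real_sum
    by (simp add: atLeast0LessThan del: of_real_power)
qed

definition vec_normalize :: "complex vec \<Rightarrow> complex vec" where
  "vec_normalize v = of_real (1 / sqrt (\<Sum>i<dim_vec v. (cmod (v $ i))\<^sup>2)) \<cdot>\<^sub>v v"

lemma vec_normalize_carrier [simp]: "v \<in> carrier_vec n \<Longrightarrow> vec_normalize v \<in> carrier_vec n"
  by (simp add: vec_normalize_def)

lemma cscalar_prod_smult:
  assumes "dim_vec w = dim_vec (v :: complex vec)"
  shows "(a \<cdot>\<^sub>v v) \<bullet>c (b \<cdot>\<^sub>v w) = a * cnj b * (v \<bullet>c w)"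
  using assms by (simp add: scalar_prod_def sum_distrib_left algebra_simps)

lemma cscalar_prod_vec_normalize_eq_0:
  assumes "dim_vec w = dim_vec (v :: complex vec)" "v \<bullet>c w = 0"
  shows "vec_normalize v \<bullet>c vec_normalize w = 0"
  unfolding vec_normalize_def using assms by (subst cscalar_prod_smult) auto

lemma cscalar_prod_vec_normalize_self:
  assumes "v \<bullet>c v \<noteq> 0"
  shows "vec_normalize v \<bullet>c vec_normalize v = 1"
proof -
  define s where "s = (\<Sum>i<dim_vec v. (cmod (v $ i))\<^sup>2)"
  have vv: "v \<bullet>c v = of_real s" unfolding s_def by (rule cscalar_prod_self)
  have "s \<ge> 0" unfolding s_def by (auto intro: sum_nonneg)
  moreover have "s \<noteq> 0" using assms vv by auto
  ultimately have "s > 0" by simp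
  then have "1 / sqrt s * (1 / sqrt s) * s = 1" by (simp add: field_simps)
  moreover have "vec_normalize v \<bullet>c vec_normalize v = of_real (1 / sqrt s) * cnj (of_real (1 / sqrt s)) * (v \<bullet>c v)"
    unfolding vec_normalize_def s_def by (rule cscalar_prod_smult) simp
  ultimately show ?thesis by (simp add: vv flip: of_real_mult)
qed

lemma unitary_mat_of_cols:
  assumes len: "length ws = n" and ws: "set ws \<subseteq> carrier_vec n"
    and orth: "\<And>i j. i < n \<Longrightarrow> j < n \<Longrightarrow> ws ! j \<bullet>c ws ! i = (if i = j then 1 else 0)"
  shows "unitary n (mat_of_cols n ws)"
  unfolding unitary_def
proof
  show W: "mat_of_cols n ws \<in> carrier_mat n n" using len by auto
  show "mat_adjoint (mat_of_cols n ws) * mat_of_cols n ws = 1\<^sub>m n"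
  proof (rule eq_matI)
    fix i j assume "i < dim_row (1\<^sub>m n)" "j < dim_col (1\<^sub>m n)"
    then have i: "i < n" and j: "j < n" by auto
    have "(mat_adjoint (mat_of_cols n ws) * mat_of_cols n ws) $$ (i, j)
        = (\<Sum>p<n. cnj (ws ! i $ p) * ws ! j $ p)"
      using W i j len by (simp add: scalar_prod_def atLeast0LessThan mat_of_cols_index)
    also have "\<dots> = ws ! j \<bullet>c ws ! i"
    proof -
      have "ws ! i \<in> carrier_vec n" using ws len i by auto
      then show ?thesis by (simp add: scalar_prod_def atLeast0LessThan mult.commute)
    qed
    finally show "(mat_adjoint (mat_of_cols n ws) * mat_of_cols n ws) $$ (i, j) = 1\<^sub>m n $$ (i, j)"
      using orth[OF i j] i j by simp
  qed (use W in auto)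
qed

lemma unitary_with_first_col:
  assumes v: "v \<in> carrier_vec n" and v0: "v \<noteq> 0\<^sub>v n"
  obtains W where "unitary n W" "col W 0 = vec_normalize v"
proof -
  interpret cof_vec_space n "TYPE(complex)" .
  define b where "b = basis_completion v"
  define ws where "ws = gram_schmidt n b"
  from basis_completion[OF v v0, folded b_def]
  have b: "set b \<subseteq> carrier_vec n" "distinct b" "\<not> lin_dep (set b)" "length b = n" "hd b = v"
    by auto
  have n: "n \<noteq> 0" using v v0 by auto
  with b obtain vs where bv: "b = v # vs" by (cases b) auto
  from gram_schmidt_result[OF b(1-3) refl, folded ws_def]
  have ws: "corthogonal ws" "set ws \<subseteq> carrier_vec n" "length ws = n"
    using b(4) by auto
  have hd_ws: "ws ! 0 = v"
    using gram_schmidt_hd[OF v, of vs] n ws(3) unfolding ws_def bv by (cases "gram_schmidt n (v # vs)") auto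
  define W where "W = mat_of_cols n (map vec_normalize ws)"
  have "unitary n W" unfolding W_def
  proof (rule unitary_mat_of_cols)
    fix i j assume i: "i < n" and j: "j < n"
    show "map vec_normalize ws ! j \<bullet>c map vec_normalize ws ! i = (if i = j then 1 else 0)"
    proof (cases "i = j")
      case True
      then show ?thesis
        using corthogonalD[OF ws(1), of i i] i ws(3) by (auto intro: cscalar_prod_vec_normalize_self)
    next
      case False
      have "ws ! j \<in> carrier_vec n" "ws ! i \<in> carrier_vec n" using ws(2,3) i j by auto
      then show ?thesis
        using corthogonalD[OF ws(1), of j i] False i j ws(3) by (simp add: cscalar_prod_vec_normalize_eq_0)
    qed
  qed (use ws in auto)
  moreover have "col W 0 = vec_normalize v"
    unfolding W_def using n ws hd_ws v by (subst col_mat_of_cols) auto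
  ultimately show ?thesis by (rule that)
qed

section \<open>The spectral theorem for Hermitian matrices\<close>

lemma unitary_similar:
  assumes W: "unitary n W" and A: "A \<in> carrier_mat n n"
  shows "similar_mat (mat_adjoint W * A * W) A"
proof -
  have W': "W \<in> carrier_mat n n" using W by (rule unitary_carrier)
  show ?thesis
    unfolding similar_mat_def similar_mat_wit_def Let_def
    using W' A W unitary_mult_adjoint[OF W] by (intro exI[of _ "mat_adjoint W"] exI[of _ W])
      (auto simp: unitary_def)
qed

lemma unitary_congruence_mult:
  assumes W: "unitary n W" and P: "unitary n P" and A: "A \<in> carrier_mat n n"
  shows "mat_adjoint (W * P) * A * (W * P) = mat_adjoint P * (mat_adjoint W * A * W) * P"
proof -
  have W': "W \<in> carrier_mat n n" and P': "P \<in> carrier_mat n n"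
    using W P by (simp_all add: unitary_carrier)
  show ?thesis
    using A W' P'
    by (simp add: mat_adjoint_mult[OF W' P'] assoc_mult_mat[of _ n n _ n _ n] mult_carrier_mat[of _ n n])
qed

lemma unitary_congruence_first_col:
  assumes A: "A \<in> carrier_mat n n" and W: "unitary n W" and n: "0 < n"
    and eigen: "A *\<^sub>v col W 0 = e \<cdot>\<^sub>v col W 0" and i: "i < n"
  shows "(mat_adjoint W * A * W) $$ (i, 0) = (if i = 0 then e else 0)"
proof -
  have W': "W \<in> carrier_mat n n" using W by (rule unitary_carrier)
  have "mat_adjoint W * A * W = mat_adjoint W * (A * W)"
    using A W' by (intro assoc_mult_mat[of _ n n _ n _ n]) auto
  then have "col (mat_adjoint W * A * W) 0 = mat_adjoint W *\<^sub>v col (A * W) 0"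
    using A W' n by (simp add: col_mult2[of _ n n _ n])
  also have "\<dots> = mat_adjoint W *\<^sub>v (A *\<^sub>v col W 0)"
    using A W' n by (simp only: col_mult2[OF A W'])
  also have "\<dots> = e \<cdot>\<^sub>v col (mat_adjoint W * W) 0"
    using W' n unfolding eigen by (simp add: mult_mat_vec[of _ n n] col_mult2[of _ n n _ n])
  also have "\<dots> = e \<cdot>\<^sub>v unit_vec n 0"
    using W n by (simp add: unitary_def)
  finally have "col (mat_adjoint W * A * W) 0 $ i = (e \<cdot>\<^sub>v unit_vec n 0) $ i" by simp
  then show ?thesis using i A W' n by simp
qed

lemma hermitian_deflation:
  fixes A :: "complex mat"
  assumes A: "A \<in> carrier_mat (Suc m) (Suc m)" and herm: "mat_adjoint A = A"
    and col0: "\<And>i. i < Suc m \<Longrightarrow> A $$ (i, 0) = (if i = 0 then e else 0)"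
  obtains A3 where "A3 \<in> carrier_mat m m" "mat_adjoint A3 = A3"
    "A = four_block_mat (mat 1 1 (\<lambda>_. e)) (0\<^sub>m 1 m) (0\<^sub>m m 1) A3"
proof
  have sym: "i < Suc m \<Longrightarrow> j < Suc m \<Longrightarrow> A $$ (i, j) = cnj (A $$ (j, i))" for i j
    using arg_cong[OF herm, of "\<lambda>M. M $$ (i, j)"] A by simp
  have row0: "j < Suc m \<Longrightarrow> A $$ (0, j) = (if j = 0 then e else 0)" for j
    using sym[of 0 j] col0[of j] col0[of 0] sym[of 0 0] by auto
  define A3 where "A3 = mat m m (\<lambda>(i, j). A $$ (Suc i, Suc j))"
  show "A3 \<in> carrier_mat m m" unfolding A3_def by simp
  show "mat_adjoint A3 = A3"
    by (rule eq_matI) (auto simp: A3_def sym[symmetric])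
  show "A = four_block_mat (mat 1 1 (\<lambda>_. e)) (0\<^sub>m 1 m) (0\<^sub>m m 1) A3"
  proof (rule eq_matI)
    fix i j assume "i < dim_row (four_block_mat (mat 1 1 (\<lambda>_. e)) (0\<^sub>m 1 m) (0\<^sub>m m 1) A3)"
      "j < dim_col (four_block_mat (mat 1 1 (\<lambda>_. e)) (0\<^sub>m 1 m) (0\<^sub>m m 1) A3)"
    then have i: "i < Suc m" and j: "j < Suc m" by (auto simp: A3_def)
    show "A $$ (i, j) = four_block_mat (mat 1 1 (\<lambda>_. e)) (0\<^sub>m 1 m) (0\<^sub>m m 1) A3 $$ (i, j)"
      using i j col0[OF i] row0[OF j] by (cases i; cases j) (auto simp: A3_def)
  qed (use A in \<open>auto simp: A3_def\<close>)
qed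

lemma char_poly_four_block_scalar:
  assumes "A3 \<in> carrier_mat m m"
  shows "char_poly (four_block_mat (mat 1 1 (\<lambda>_. e)) (0\<^sub>m 1 m) (0\<^sub>m m 1) A3) = [:-e, 1:] * char_poly A3"
proof -
  have "char_poly (mat 1 1 (\<lambda>_. e)) = [:-e, 1:]"
    by (simp add: char_poly_defs det_def sign_def)
  then show ?thesis
    using char_poly_four_block_zeros_col[of "mat 1 1 (\<lambda>_. e)" "0\<^sub>m 1 m" m A3] assms by simp
qed

lemma four_block_one_congruence:
  fixes U3 :: "complex mat"
  assumes U3: "U3 \<in> carrier_mat m m" and A3: "A3 \<in> carrier_mat m m"
  defines "P \<equiv> four_block_mat (1\<^sub>m 1) (0\<^sub>m 1 m) (0\<^sub>m m 1) U3"
  shows "mat_adjoint P * four_block_mat (mat 1 1 (\<lambda>_. e)) (0\<^sub>m 1 m) (0\<^sub>m m 1) A3 * P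
    = four_block_mat (mat 1 1 (\<lambda>_. e)) (0\<^sub>m 1 m) (0\<^sub>m m 1) (mat_adjoint U3 * A3 * U3)"
proof -
  have "mat_adjoint P * four_block_mat (mat 1 1 (\<lambda>_. e)) (0\<^sub>m 1 m) (0\<^sub>m m 1) A3
      = four_block_mat (mat 1 1 (\<lambda>_. e)) (0\<^sub>m 1 m) (0\<^sub>m m 1) (mat_adjoint U3 * A3)"
    unfolding P_def mat_adjoint_four_block_one[OF U3]
    by (subst mult_four_block_mat[of _ 1 1 _ m _ m]) (use U3 A3 in auto)
  then show ?thesis
    unfolding P_def by (simp, subst mult_four_block_mat[of _ 1 1 _ m _ m]) (use U3 A3 in auto)
qed

lemma hermitian_unitary_deflation:
  fixes A :: "complex mat"
  assumes A: "A \<in> carrier_mat (Suc m) (Suc m)" and herm: "mat_adjoint A = A" and e: "eigenvalue A e"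
  obtains W A3 where "unitary (Suc m) W" "A3 \<in> carrier_mat m m" "mat_adjoint A3 = A3"
    "mat_adjoint W * A * W = four_block_mat (mat 1 1 (\<lambda>_. e)) (0\<^sub>m 1 m) (0\<^sub>m m 1) A3"
proof -
  have "eigenvector A (find_eigenvector A e) e" by (rule find_eigenvector[OF A e])
  then obtain v where v: "v \<in> carrier_vec (Suc m)" "v \<noteq> 0\<^sub>v (Suc m)" and Av: "A *\<^sub>v v = e \<cdot>\<^sub>v v"
    using A unfolding eigenvector_def carrier_matD(1)[OF A] by blast
  obtain W where W: "unitary (Suc m) W" and W0: "col W 0 = vec_normalize v"
    using unitary_with_first_col[OF v] .
  have eigen: "A *\<^sub>v col W 0 = e \<cdot>\<^sub>v col W 0"
    unfolding W0 vec_normalize_def using A v Av by (simp add: mult_mat_vec smult_smult_assoc mult.commute)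
  have "mat_adjoint W * A * W \<in> carrier_mat (Suc m) (Suc m)"
    using A unitary_carrier[OF W] by (meson mat_adjoint_carrier mult_carrier_mat)
  moreover have "mat_adjoint (mat_adjoint W * A * W) = mat_adjoint W * A * W"
    using mat_adjoint_congruence[OF A herm unitary_carrier[OF W]] .
  moreover have "\<And>i. i < Suc m \<Longrightarrow> (mat_adjoint W * A * W) $$ (i, 0) = (if i = 0 then e else 0)"
    by (rule unitary_congruence_first_col[OF A W _ eigen]) auto
  ultimately obtain A3 where "A3 \<in> carrier_mat m m" "mat_adjoint A3 = A3"
    "mat_adjoint W * A * W = four_block_mat (mat 1 1 (\<lambda>_. e)) (0\<^sub>m 1 m) (0\<^sub>m m 1) A3"
    by (rule hermitian_deflation)
  with W show ?thesis by (rule that)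
qed

lemma hermitian_unitary_diagonalization:
  fixes A :: "complex mat"
  assumes "A \<in> carrier_mat n n" "mat_adjoint A = A" "char_poly A = (\<Prod>e\<leftarrow>es. [:-e, 1:])"
  shows "\<exists>U. unitary n U \<and> mat_adjoint U * A * U = mat_diag n (\<lambda>i. es ! i)"
  using assms
proof (induction es arbitrary: n A)
  case Nil
  then have "n = 0" using degree_monic_char_poly[of A n] by simp
  then show ?case
    by (intro exI[of _ "1\<^sub>m 0"]) (use Nil in \<open>auto simp: unitary_def mat_diag_def\<close>)
next
  case (Cons e es n A)
  note A = Cons.prems(1) and herm = Cons.prems(2)
  have cp: "char_poly A = [:-e, 1:] * (\<Prod>e\<leftarrow>es. [:-e, 1:])" using Cons.prems(3) by simp
  have "degree (char_poly A) = Suc (degree (\<Prod>e\<leftarrow>es. [:-e, 1:]))"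
    unfolding cp by (subst degree_mult_eq) (auto simp: prod_list_zero_iff)
  then obtain m where n: "n = Suc m" using degree_monic_char_poly[OF A] by (cases n) auto
  have "eigenvalue A e" unfolding eigenvalue_root_char_poly[OF A] cp by simp
  then obtain W A3 where W: "unitary n W" and A3: "A3 \<in> carrier_mat m m" "mat_adjoint A3 = A3"
    and block: "mat_adjoint W * A * W = four_block_mat (mat 1 1 (\<lambda>_. e)) (0\<^sub>m 1 m) (0\<^sub>m m 1) A3"
    using hermitian_unitary_deflation[of A m] A herm unfolding n by blast
  have "[:-e, 1:] * char_poly A3 = [:-e, 1:] * (\<Prod>e\<leftarrow>es. [:-e, 1:])"
    using char_poly_similar[OF unitary_similar[OF W A]] cp
    unfolding block char_poly_four_block_scalar[OF A3(1)] by simp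
  then have "char_poly A3 = (\<Prod>e\<leftarrow>es. [:-e, 1:])"
    by (metis mult_cancel_left pCons_eq_0_iff zero_neq_one)
  from Cons.IH[OF A3 this] obtain U3 where U3: "unitary m U3"
    and D3: "mat_adjoint U3 * A3 * U3 = mat_diag m (\<lambda>i. es ! i)" by blast
  define P where "P = four_block_mat (1\<^sub>m 1) (0\<^sub>m 1 m) (0\<^sub>m m 1) U3"
  have P: "unitary n P" unfolding P_def n by (rule unitary_four_block_one[OF U3])
  have "mat_adjoint (W * P) * A * (W * P) = mat_adjoint P * (mat_adjoint W * A * W) * P"
    by (rule unitary_congruence_mult[OF W P A])
  also have "\<dots> = four_block_mat (mat 1 1 (\<lambda>_. e)) (0\<^sub>m 1 m) (0\<^sub>m m 1) (mat_diag m (\<lambda>i. es ! i))"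
    unfolding block P_def D3[symmetric]
    by (rule four_block_one_congruence[OF unitary_carrier[OF U3] A3(1)])
  also have "\<dots> = mat_diag n (\<lambda>i. (e # es) ! i)"
    unfolding n by (rule eq_matI) (auto simp: mat_diag_def nth_Cons')
  finally show ?case using unitary_mult[OF W P] by blast
qed

lemma length_linear_factors_char_poly:
  assumes "A \<in> carrier_mat n n" "char_poly A = (\<Prod>e\<leftarrow>es. [:-e, 1:])"
  shows "length es = n"
  using degree_linear_factors[of uminus es] degree_monic_char_poly[OF assms(1)] assms(2) by simp

lemma hermitian_eigenvalue_real:
  fixes A :: "complex mat"
  assumes A: "A \<in> carrier_mat n n" and herm: "mat_adjoint A = A"
    and cp: "char_poly A = (\<Prod>e\<leftarrow>es. [:-e, 1:])" and a: "a \<in> set es"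
  shows "of_real (Re a) = a"
proof -
  obtain U where U: "unitary n U" and D: "mat_adjoint U * A * U = mat_diag n (\<lambda>i. es ! i)"
    using hermitian_unitary_diagonalization[OF A herm cp] by blast
  obtain i where i: "i < n" and ai: "a = es ! i"
    using a length_linear_factors_char_poly[OF A cp] by (auto simp: in_set_conv_nth)
  have herm_diag: "mat_adjoint (mat_diag n (\<lambda>i. es ! i)) = mat_diag n (\<lambda>i. es ! i)"
    unfolding D[symmetric] by (rule mat_adjoint_congruence[OF A herm unitary_carrier[OF U]])
  have "cnj a = mat_adjoint (mat_diag n (\<lambda>i. es ! i)) $$ (i, i)"
    using i ai by (simp add: mat_diag_def)
  also have "\<dots> = a"
    unfolding herm_diag using i ai by (simp add: mat_diag_def)
  finally have "Im (cnj a) = Im a" by (rule arg_cong)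
  then show ?thesis by (simp add: complex_eq_iff)
qed

lemma proots_linear_factors: "proots (\<Prod>e\<leftarrow>es. [:-e, 1:]) = mset (es :: complex list)"
proof (induction es)
  case (Cons e es)
  have "proots (\<Prod>e\<leftarrow>e # es. [:-e, 1:]) = proots [:-e, 1:] + proots (\<Prod>e\<leftarrow>es. [:-e, 1:])"
    unfolding list.map prod_list.Cons by (rule proots_mult) (auto simp: prod_list_zero_iff)
  then show ?case using Cons.IH by simp
qed simp

lemma length_eigvals_desc:
  assumes "A \<in> carrier_mat n n"
  shows "length (eigvals_desc A) = n"
proof -
  have "length (eigvals_desc A) = size (proots (char_poly A))"
    unfolding eigvals_desc_def by (metis length_rev size_image_mset size_mset mset_sorted_list_of_multiset)
  then show ?thesis
    using size_proots_complex[of "char_poly A"] degree_monic_char_poly[OF assms] by simp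
qed

lemma eig_antimono:
  assumes "A \<in> carrier_mat n n" "i \<le> j" "j < n"
  shows "eig (Suc j) A \<le> eig (Suc i) A"
proof -
  have "sorted (rev (eigvals_desc A))" by (simp add: eigvals_desc_def)
  from sorted_rev_nth_mono[OF this] show ?thesis
    using length_eigvals_desc[OF assms(1)] assms(2,3) by (simp add: eig_def)
qed

definition eigendecomp :: "nat \<Rightarrow> complex mat \<Rightarrow> complex mat \<Rightarrow> (nat \<Rightarrow> real) \<Rightarrow> bool" where
  "eigendecomp n M U d \<longleftrightarrow> unitary n U \<and>
     (\<forall>p<n. \<forall>q<n. M $$ (p, q) = (\<Sum>i<n. of_real (d i) * U $$ (p, i) * cnj (U $$ (q, i))))"

lemma hermitian_eigendecomp:
  assumes A: "A \<in> carrier_mat n n" and "hermitian A"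
  obtains U where "eigendecomp n A U (\<lambda>i. eig (Suc i) A)"
proof -
  have herm: "mat_adjoint A = A" using \<open>hermitian A\<close> unfolding hermitian_def by simp
  obtain as where cp0: "char_poly A = (\<Prod>a\<leftarrow>as. [:-a, 1:])"
    using char_poly_factorized[OF A] by blast
  \<comment> \<open>The roots are real, so their sorted real parts factor the characteristic polynomial too.\<close>
  define es where "es = map complex_of_real (eigvals_desc A)"
  have "mset es = image_mset (\<lambda>a. of_real (Re a)) (mset as)"
    by (simp add: es_def eigvals_desc_def cp0 proots_linear_factors multiset.map_comp comp_def)
  also have "\<dots> = image_mset id (mset as)"
    by (rule multiset.map_cong0) (simp add: hermitian_eigenvalue_real[OF A herm cp0])
  finally have "image_mset (\<lambda>e. [:-e, 1:]) (mset es) = image_mset (\<lambda>e. [:-e, 1:]) (mset as)"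
    by simp
  then have "char_poly A = (\<Prod>e\<leftarrow>es. [:-e, 1:])"
    unfolding cp0 by (simp flip: prod_mset_prod_list mset_map)
  then obtain U where U: "unitary n U" and D: "mat_adjoint U * A * U = mat_diag n (\<lambda>i. es ! i)"
    using hermitian_unitary_diagonalization[OF A herm] by blast
  have U': "U \<in> carrier_mat n n" using U by (rule unitary_carrier)
  have "A = (U * mat_adjoint U) * A * (U * mat_adjoint U)"
    using A unitary_mult_adjoint[OF U] by simp
  also have "\<dots> = U * (mat_adjoint U * A * U) * mat_adjoint U"
    using A U' by (simp add: assoc_mult_mat[of _ n n _ n _ n] mult_carrier_mat[of _ n n])
  finally have A_eq: "A = U * mat_diag n (\<lambda>i. es ! i) * mat_adjoint U" unfolding D .
  have "\<forall>p<n. \<forall>q<n. A $$ (p, q) = (\<Sum>i<n. of_real (eig (Suc i) A) * U $$ (p, i) * cnj (U $$ (q, i)))"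
    using U' length_eigvals_desc[OF A]
    by (subst A_eq) (simp add: mat_diag_mult_right[OF U'] scalar_prod_def atLeast0LessThan es_def eig_def mult_ac)
  with U show ?thesis by (intro that[of U]) (simp add: eigendecomp_def)
qed

section \<open>Quadratic forms\<close>

definition sqnorm :: "nat \<Rightarrow> (nat \<Rightarrow> complex) \<Rightarrow> real" where
  "sqnorm n x = (\<Sum>q<n. (cmod (x q))\<^sup>2)"

definition quad_form :: "nat \<Rightarrow> complex mat \<Rightarrow> (nat \<Rightarrow> complex) \<Rightarrow> complex" where
  "quad_form n M x = (\<Sum>p<n. \<Sum>q<n. cnj (x p) * M $$ (p, q) * x q)"

lemma quad_form_rank_one_sum:
  fixes f :: "'t \<Rightarrow> nat \<Rightarrow> complex" and w :: "'t \<Rightarrow> real"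
  assumes "\<forall>p<n. \<forall>q<n. M $$ (p, q) = (\<Sum>t\<in>T. of_real (w t) * f t p * cnj (f t q))"
  shows "quad_form n M x = of_real (\<Sum>t\<in>T. w t * (cmod (cinner n (f t) x))\<^sup>2)"
proof -
  have "quad_form n M x =
      (\<Sum>p<n. \<Sum>q<n. \<Sum>t\<in>T. of_real (w t) * (cnj (x p) * f t p) * (cnj (f t q) * x q))"
    unfolding quad_form_def using assms
    by (intro sum.cong refl) (simp add: sum_distrib_left sum_distrib_right mult_ac)
  also have "\<dots> = (\<Sum>p<n. \<Sum>t\<in>T. \<Sum>q<n. of_real (w t) * (cnj (x p) * f t p) * (cnj (f t q) * x q))"
    by (intro sum.cong refl sum.swap)
  also have "\<dots> = (\<Sum>t\<in>T. \<Sum>p<n. \<Sum>q<n. of_real (w t) * (cnj (x p) * f t p) * (cnj (f t q) * x q))"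
    by (rule sum.swap)
  also have "\<dots> = (\<Sum>t\<in>T. of_real (w t) * (cnj (cinner n (f t) x) * cinner n (f t) x))"
    by (intro sum.cong refl) (simp add: cinner_def sum_distrib_left sum_distrib_right mult_ac)
  also have "\<dots> = of_real (\<Sum>t\<in>T. w t * (cmod (cinner n (f t) x))\<^sup>2)"
    by (simp add: complex_norm_square mult.commute del: of_real_power)
  finally show ?thesis .
qed

lemma quad_form_one: "quad_form n (1\<^sub>m n) x = of_real (sqnorm n x)"
proof -
  have "quad_form n (1\<^sub>m n) x = (\<Sum>p<n. cnj (x p) * x p)"
    unfolding quad_form_def by (intro sum.cong refl) (simp add: if_distrib if_distribR cong: if_cong)
  also have "\<dots> = of_real (sqnorm n x)"
    by (simp add: sqnorm_def complex_norm_square mult.commute del: of_real_power)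
  finally show ?thesis .
qed

lemma unitary_parseval:
  assumes "unitary n U"
  shows "(\<Sum>i<n. (cmod (cinner n (\<lambda>q. U $$ (q, i)) x))\<^sup>2) = sqnorm n x"
proof -
  have "quad_form n (1\<^sub>m n) x = of_real (\<Sum>i<n. 1 * (cmod (cinner n (\<lambda>q. U $$ (q, i)) x))\<^sup>2)"
    by (rule quad_form_rank_one_sum) (simp add: unitary_rows_orthonormal[OF assms])
  then show ?thesis unfolding quad_form_one by (simp only: of_real_eq_iff mult_1)
qed

lemma cinner_unitary_combination:
  assumes "unitary n U" "t < n"
  shows "cinner n (\<lambda>q. U $$ (q, t)) (\<lambda>q. \<Sum>l<n. g l * U $$ (q, l)) = g t"
proof -
  have "cinner n (\<lambda>q. U $$ (q, t)) (\<lambda>q. \<Sum>l<n. g l * U $$ (q, l))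
      = (\<Sum>q<n. \<Sum>l<n. g l * (cnj (U $$ (q, t)) * U $$ (q, l)))"
    unfolding cinner_def by (simp add: sum_distrib_left mult_ac)
  also have "\<dots> = (\<Sum>l<n. \<Sum>q<n. g l * (cnj (U $$ (q, t)) * U $$ (q, l)))"
    by (rule sum.swap)
  also have "\<dots> = (\<Sum>l<n. g l * cinner n (\<lambda>q. U $$ (q, t)) (\<lambda>q. U $$ (q, l)))"
    unfolding cinner_def by (simp add: sum_distrib_left)
  also have "\<dots> = g t"
    using assms by (simp add: unitary_cols_orthonormal if_distrib cong: if_cong)
  finally show ?thesis .
qed

lemma sqnorm_unitary_combination:
  assumes "unitary n U"
  shows "sqnorm n (\<lambda>q. \<Sum>l<n. g l * U $$ (q, l)) = (\<Sum>l<n. (cmod (g l))\<^sup>2)"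
  using unitary_parseval[OF assms, of "\<lambda>q. \<Sum>l<n. g l * U $$ (q, l)", symmetric]
  by (simp add: cinner_unitary_combination[OF assms])

lemma unitary_entry_sq_le_1:
  assumes "unitary n U" "q < n" "i < n"
  shows "(cmod (U $$ (q, i)))\<^sup>2 \<le> 1"
proof -
  have "of_real (\<Sum>l<n. (cmod (U $$ (q, l)))\<^sup>2) = (\<Sum>l<n. U $$ (q, l) * cnj (U $$ (q, l)))"
    by (simp add: complex_norm_square del: of_real_power)
  also have "\<dots> = 1" using unitary_rows_orthonormal[OF assms(1,2,2)] by simp
  finally have "(\<Sum>l<n. (cmod (U $$ (q, l)))\<^sup>2) = 1" by (simp only: of_real_eq_1_iff)
  moreover have "(cmod (U $$ (q, i)))\<^sup>2 \<le> (\<Sum>l<n. (cmod (U $$ (q, l)))\<^sup>2)"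
    by (rule member_le_sum) (use assms in auto)
  ultimately show ?thesis by simp
qed

lemma eigendecomp_quad_form:
  assumes "eigendecomp n M U d"
  shows "quad_form n M x = of_real (\<Sum>i<n. d i * (cmod (cinner n (\<lambda>q. U $$ (q, i)) x))\<^sup>2)"
  by (rule quad_form_rank_one_sum) (use assms in \<open>simp add: eigendecomp_def\<close>)

lemma psd_quad_form_nonneg:
  assumes "psd A" "A \<in> carrier_mat n n"
  shows "0 \<le> Re (quad_form n A x)"
proof -
  have "quad_form n A x = (\<Sum>i<n. cnj (vec n x $ i) * (A *\<^sub>v vec n x) $ i)"
    unfolding quad_form_def using assms(2)
    by (intro sum.cong refl) (simp add: scalar_prod_def atLeast0LessThan sum_distrib_left mult.assoc)
  moreover have "\<forall>y\<in>carrier_vec n. 0 \<le> Re (\<Sum>i<n. cnj (y $ i) * (A *\<^sub>v y) $ i)"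
    using assms unfolding psd_def by (metis carrier_matD(1))
  ultimately show ?thesis by (metis vec_carrier)
qed

lemma psd_eig_nonneg:
  assumes "psd A" "A \<in> carrier_mat n n" "i < n"
  shows "0 \<le> eig (Suc i) A"
proof -
  have "hermitian A" using assms(1) unfolding psd_def by simp
  then obtain U where U: "eigendecomp n A U (\<lambda>i. eig (Suc i) A)"
    using hermitian_eigendecomp[OF assms(2)] by blast
  have "quad_form n A (\<lambda>q. U $$ (q, i))
      = of_real (\<Sum>t<n. eig (Suc t) A * (cmod (cinner n (\<lambda>q. U $$ (q, t)) (\<lambda>q. U $$ (q, i))))\<^sup>2)"
    by (rule eigendecomp_quad_form[OF U])
  also have "(\<Sum>t<n. eig (Suc t) A * (cmod (cinner n (\<lambda>q. U $$ (q, t)) (\<lambda>q. U $$ (q, i))))\<^sup>2)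
      = (\<Sum>t<n. if t = i then eig (Suc t) A else 0)"
    using U assms(3) by (intro sum.cong refl) (simp add: eigendecomp_def unitary_cols_orthonormal)
  finally have "quad_form n A (\<lambda>q. U $$ (q, i)) = of_real (eig (Suc i) A)"
    using assms(3) by simp
  then show ?thesis using psd_quad_form_nonneg[OF assms(1,2), of "\<lambda>q. U $$ (q, i)"] by simp
qed

lemma eigendecomp_rayleigh_lower_bound:
  assumes M: "eigendecomp n M W c" and c: "\<And>i j. i \<le> j \<Longrightarrow> j < n \<Longrightarrow> c j \<le> c i"
    and m: "m < n" and g: "\<forall>l>m. g l = 0"
  defines "x \<equiv> \<lambda>q. \<Sum>l<n. g l * W $$ (q, l)"
  shows "c m * sqnorm n x \<le> Re (quad_form n M x)"
proof -
  have W: "unitary n W" using M by (simp add: eigendecomp_def)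
  have "c m * sqnorm n x = (\<Sum>l<n. c m * (cmod (g l))\<^sup>2)"
    unfolding x_def sqnorm_unitary_combination[OF W] by (simp add: sum_distrib_left)
  also have "\<dots> \<le> (\<Sum>l<n. c l * (cmod (g l))\<^sup>2)"
  proof (rule sum_mono)
    fix l
    show "c m * (cmod (g l))\<^sup>2 \<le> c l * (cmod (g l))\<^sup>2"
    proof (cases "l \<le> m")
      case True
      then show ?thesis using c[of l m] m by (simp add: mult_right_mono)
    qed (use g in simp)
  qed
  also have "\<dots> = Re (quad_form n M x)"
    unfolding eigendecomp_quad_form[OF M] x_def by (simp add: cinner_unitary_combination[OF W])
  finally show ?thesis .
qed

lemma underdetermined_homogeneous_system:
  fixes E :: "nat \<Rightarrow> nat \<Rightarrow> 'a :: field"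
  obtains g where "\<exists>l\<le>m. g l \<noteq> 0" "\<forall>l>m. g l = 0" "\<forall>r<m. (\<Sum>l\<le>m. E r l * g l) = 0"
proof -
  define M where "M = mat\<^sub>r (Suc m) (Suc m) (\<lambda>r. if r = m then 0\<^sub>v (Suc m) else vec (Suc m) (E r))"
  have M: "M \<in> carrier_mat (Suc m) (Suc m)" unfolding M_def by simp
  have "det M = 0" unfolding M_def by (rule det_row_0) auto
  then obtain v where v: "v \<in> carrier_vec (Suc m)" "v \<noteq> 0\<^sub>v (Suc m)" and Mv: "M *\<^sub>v v = 0\<^sub>v (Suc m)"
    using det_0_iff_vec_prod_zero[OF M] by blast
  define g where "g l = (if l \<le> m then v $ l else 0)" for l
  show ?thesis
  proof
    show "\<exists>l\<le>m. g l \<noteq> 0"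
      using v by (auto simp: g_def less_Suc_eq_le intro!: eq_vecI)
    show "\<forall>l>m. g l = 0" by (simp add: g_def)
    show "\<forall>r<m. (\<Sum>l\<le>m. E r l * g l) = 0"
    proof (intro allI impI)
      fix r assume r: "r < m"
      have "(M *\<^sub>v v) $ r = 0" using Mv r by simp
      then show "(\<Sum>l\<le>m. E r l * g l) = 0"
        using r v by (simp add: M_def scalar_prod_def g_def atLeast0LessThan lessThan_Suc_atMost)
    qed
  qed
qed

lemma exists_nonzero_combination_orthogonal:
  fixes W :: "complex mat" and f :: "nat \<Rightarrow> nat \<Rightarrow> complex"
  assumes "m < n"
  obtains g where "\<exists>l\<le>m. g l \<noteq> 0" "\<forall>l>m. g l = 0"
    "\<forall>r<m. cinner n (f r) (\<lambda>q. \<Sum>l<n. g l * W $$ (q, l)) = 0"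
proof -
  obtain g where g: "\<exists>l\<le>m. g l \<noteq> 0" "\<forall>l>m. g l = 0"
    and sol: "\<forall>r<m. (\<Sum>l\<le>m. cinner n (f r) (\<lambda>q. W $$ (q, l)) * g l) = 0"
    by (rule underdetermined_homogeneous_system)
  have "cinner n (f r) (\<lambda>q. \<Sum>l<n. g l * W $$ (q, l)) = (\<Sum>l\<le>m. cinner n (f r) (\<lambda>q. W $$ (q, l)) * g l)"
    for r
  proof -
    have "cinner n (f r) (\<lambda>q. \<Sum>l<n. g l * W $$ (q, l)) = (\<Sum>q<n. \<Sum>l<n. cnj (f r q) * W $$ (q, l) * g l)"
      unfolding cinner_def by (simp add: sum_distrib_left mult_ac)
    also have "\<dots> = (\<Sum>l<n. cinner n (f r) (\<lambda>q. W $$ (q, l)) * g l)"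
      unfolding cinner_def by (subst sum.swap) (simp add: sum_distrib_right)
    also have "\<dots> = (\<Sum>l\<le>m. cinner n (f r) (\<lambda>q. W $$ (q, l)) * g l)"
      using assms g(2) by (intro sum.mono_neutral_right) auto
    finally show ?thesis .
  qed
  with g sol show ?thesis by (intro that) auto
qed

(* The easy half of Courant-Fischer; x is taken in the span of the top m+1 eigenvectors. *)
lemma hermitian_exists_orthogonal_rayleigh:
  fixes f :: "nat \<Rightarrow> nat \<Rightarrow> complex"
  assumes C: "C \<in> carrier_mat n n" "hermitian C" and m: "m < n"
  obtains x where "0 < sqnorm n x" "\<forall>r<m. cinner n (f r) x = 0"
    "eig (Suc m) C * sqnorm n x \<le> Re (quad_form n C x)"
proof -
  obtain W where W: "eigendecomp n C W (\<lambda>i. eig (Suc i) C)" using hermitian_eigendecomp[OF C] .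
  obtain g where g: "\<exists>l\<le>m. g l \<noteq> 0" "\<forall>l>m. g l = 0"
    and orth: "\<forall>r<m. cinner n (f r) (\<lambda>q. \<Sum>l<n. g l * W $$ (q, l)) = 0"
    by (rule exists_nonzero_combination_orthogonal[OF m])
  have "0 < sqnorm n (\<lambda>q. \<Sum>l<n. g l * W $$ (q, l))"
  proof -
    obtain l where l: "l \<le> m" "g l \<noteq> 0" using g(1) by blast
    have "0 < (\<Sum>l<n. (cmod (g l))\<^sup>2)" using l m by (intro sum_pos2[of _ l]) auto
    then show ?thesis using W unfolding eigendecomp_def by (simp add: sqnorm_unitary_combination)
  qed
  moreover have "eig (Suc m) C * sqnorm n (\<lambda>q. \<Sum>l<n. g l * W $$ (q, l))
      \<le> Re (quad_form n C (\<lambda>q. \<Sum>l<n. g l * W $$ (q, l)))"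
    by (rule eigendecomp_rayleigh_lower_bound[OF W eig_antimono[OF C(1)] m g(2)])
  ultimately show ?thesis using orth that by blast
qed

section \<open>Hadamard products\<close>

lemma hadamard_carrier: "A \<in> carrier_mat n n \<Longrightarrow> hadamard A B \<in> carrier_mat n n"
  unfolding hadamard_def by auto

lemma hermitian_hadamard:
  assumes A: "A \<in> carrier_mat n n" "hermitian A" and B: "B \<in> carrier_mat n n" "hermitian B"
  shows "hermitian (hadamard A B)"
proof -
  have sym: "cnj (M $$ (j, i)) = M $$ (i, j)"
    if "M \<in> carrier_mat n n" "hermitian M" "i < n" "j < n" for M i j
  proof -
    have "mat_adjoint M $$ (i, j) = M $$ (i, j)" using that(2) unfolding hermitian_def by simp
    then show ?thesis using that(1,3,4) by simp
  qed
  have "mat_adjoint (hadamard A B) = hadamard A B"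
    using A(1) B(1) sym[OF A] sym[OF B] by (intro eq_matI) (auto simp: hadamard_def)
  moreover have "hadamard A B \<in> carrier_mat n n" using A(1) by (rule hadamard_carrier)
  ultimately show ?thesis unfolding hermitian_def by auto
qed

lemma quad_form_hadamard:
  assumes A: "A \<in> carrier_mat n n" and U: "eigendecomp n A U a" and V: "eigendecomp n B V b"
  shows "quad_form n (hadamard A B) x = of_real (\<Sum>(i, j)\<in>{..<n} \<times> {..<n}.
    a i * b j * (cmod (cinner n (\<lambda>q. U $$ (q, i) * V $$ (q, j)) x))\<^sup>2)"
proof -
  have "hadamard A B $$ (p, q) = (\<Sum>t\<in>{..<n} \<times> {..<n}. of_real (a (fst t) * b (snd t)) *
      (U $$ (p, fst t) * V $$ (p, snd t)) * cnj (U $$ (q, fst t) * V $$ (q, snd t)))"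
    if "p < n" "q < n" for p q
  proof -
    have "hadamard A B $$ (p, q) = (\<Sum>i<n. of_real (a i) * U $$ (p, i) * cnj (U $$ (q, i)))
        * (\<Sum>j<n. of_real (b j) * V $$ (p, j) * cnj (V $$ (q, j)))"
      using that A U V by (simp add: hadamard_def eigendecomp_def)
    also have "\<dots> = (\<Sum>t\<in>{..<n} \<times> {..<n}. of_real (a (fst t) * b (snd t)) *
        (U $$ (p, fst t) * V $$ (p, snd t)) * cnj (U $$ (q, fst t) * V $$ (q, snd t)))"
      by (simp add: sum_product sum.cartesian_product split_def mult_ac)
    finally show ?thesis .
  qed
  then have "quad_form n (hadamard A B) x = of_real (\<Sum>t\<in>{..<n} \<times> {..<n}. a (fst t) * b (snd t) *
      (cmod (cinner n (\<lambda>q. U $$ (q, fst t) * V $$ (q, snd t)) x))\<^sup>2)"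
    by (intro quad_form_rank_one_sum) blast
  then show ?thesis by (simp add: split_def)
qed

lemma sum_sq_cinner_hadamard_le:
  assumes U: "unitary n U" and V: "unitary n V" and j: "j < n"
  shows "(\<Sum>i<n. (cmod (cinner n (\<lambda>q. U $$ (q, i) * V $$ (q, j)) x))\<^sup>2) \<le> sqnorm n x"
proof -
  have "(\<Sum>i<n. (cmod (cinner n (\<lambda>q. U $$ (q, i) * V $$ (q, j)) x))\<^sup>2)
      = (\<Sum>i<n. (cmod (cinner n (\<lambda>q. U $$ (q, i)) (\<lambda>q. cnj (V $$ (q, j)) * x q)))\<^sup>2)"
    by (simp add: cinner_def mult.assoc)
  also have "\<dots> = (\<Sum>q<n. (cmod (V $$ (q, j)))\<^sup>2 * (cmod (x q))\<^sup>2)"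
    by (simp add: unitary_parseval[OF U] sqnorm_def norm_mult power_mult_distrib)
  also have "\<dots> \<le> (\<Sum>q<n. 1 * (cmod (x q))\<^sup>2)"
    by (intro sum_mono mult_right_mono unitary_entry_sq_le_1[OF V _ j]) auto
  finally show ?thesis by (simp add: sqnorm_def)
qed

lemma mult_le_tail_terms:
  fixes ai a0 bj b0 z :: real
  assumes "0 \<le> ai" "ai \<le> a0" "0 \<le> bj" "bj \<le> b0" "0 \<le> z" and "\<not> P \<Longrightarrow> \<not> Q \<Longrightarrow> z = 0"
  shows "ai * bj * z \<le> (if Q then a0 * bj * z else 0) + (if P then b0 * ai * z else 0)"
proof (cases Q)
  case True
  have "ai * bj * z \<le> a0 * bj * z" using assms(1-5) by (intro mult_right_mono) auto
  moreover have "0 \<le> b0 * ai * z" using assms(1-5) by simp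
  ultimately show ?thesis using True by simp
next
  case False
  then show ?thesis
    using assms by (cases P) (auto simp: mult.commute mult_right_mono mult_left_mono)
qed

lemma weighted_sum_sq_cinner_hadamard_le:
  fixes a b :: "nat \<Rightarrow> real"
  assumes U: "unitary n U" and V: "unitary n V"
    and a: "\<And>i. i < n \<Longrightarrow> 0 \<le> a i \<and> a i \<le> a 0" and b: "\<And>j. j < n \<Longrightarrow> 0 \<le> b j \<and> b j \<le> b 0"
    and orth: "\<And>i j. i < k \<Longrightarrow> j < h \<Longrightarrow> cinner n (\<lambda>q. U $$ (q, i) * V $$ (q, j)) x = 0"
  shows "(\<Sum>(i, j)\<in>{..<n} \<times> {..<n}. a i * b j * (cmod (cinner n (\<lambda>q. U $$ (q, i) * V $$ (q, j)) x))\<^sup>2)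
    \<le> (a 0 * (\<Sum>j\<in>{h..<n}. b j) + b 0 * (\<Sum>i\<in>{k..<n}. a i)) * sqnorm n x"
proof -
  define Z where "Z i j = (cmod (cinner n (\<lambda>q. U $$ (q, i) * V $$ (q, j)) x))\<^sup>2" for i j
  define X where "X = sqnorm n x"
  have Z0: "0 \<le> Z i j" for i j unfolding Z_def by simp
  have col: "(\<Sum>i<n. Z i j) \<le> X" if "j < n" for j
    unfolding Z_def X_def by (rule sum_sq_cinner_hadamard_le[OF U V that])
  have row: "(\<Sum>j<n. Z i j) \<le> X" if "i < n" for i
    using sum_sq_cinner_hadamard_le[OF V U that, of x] unfolding Z_def X_def by (simp add: mult.commute)
  have pointwise: "a i * b j * Z i j
      \<le> (if h \<le> j then a 0 * b j * Z i j else 0) + (if k \<le> i then b 0 * a i * Z i j else 0)"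
    if "i < n" "j < n" for i j
    using a[OF that(1)] b[OF that(2)] Z0 orth[of i j] by (intro mult_le_tail_terms) (auto simp: Z_def)
  define F1 where "F1 i j = (if h \<le> j then a 0 * b j * Z i j else 0)" for i j
  define F2 where "F2 i j = (if k \<le> i then b 0 * a i * Z i j else 0)" for i j
  have restrict: "(\<Sum>j<n. if r \<le> j then f j else 0) = (\<Sum>j\<in>{r..<n}. f j)" for r and f :: "nat \<Rightarrow> real"
    by (rule sum.mono_neutral_cong_right) auto
  have "(\<Sum>(i, j)\<in>{..<n} \<times> {..<n}. a i * b j * Z i j) \<le> (\<Sum>i<n. \<Sum>j<n. F1 i j + F2 i j)"
    unfolding sum.cartesian_product[symmetric] F1_def F2_def by (intro sum_mono pointwise) auto
  also have "\<dots> = (\<Sum>j<n. \<Sum>i<n. F1 i j) + (\<Sum>i<n. \<Sum>j<n. F2 i j)"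
    by (simp add: sum.distrib sum.swap[of F1])
  also have "\<dots> = (\<Sum>j<n. if h \<le> j then a 0 * b j * (\<Sum>i<n. Z i j) else 0)
      + (\<Sum>i<n. if k \<le> i then b 0 * a i * (\<Sum>j<n. Z i j) else 0)"
    unfolding F1_def F2_def by (intro arg_cong2[where f = "(+)"] sum.cong refl) (auto simp: sum_distrib_left)
  also have "\<dots> \<le> (\<Sum>j<n. if h \<le> j then a 0 * b j * X else 0) + (\<Sum>i<n. if k \<le> i then b 0 * a i * X else 0)"
    using a b col row by (intro add_mono sum_mono) (auto intro: mult_left_mono)
  also have "\<dots> = (a 0 * (\<Sum>j\<in>{h..<n}. b j) + b 0 * (\<Sum>i\<in>{k..<n}. a i)) * X"
    unfolding restrict by (simp add: sum_distrib_left sum_distrib_right algebra_simps)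
  finally show ?thesis unfolding Z_def X_def .
qed

lemma tail_trace_eq_sum:
  assumes "A \<in> carrier_mat n n"
  shows "tail_trace r A = (\<Sum>i\<in>{r..<n}. eig (Suc i) A)"
proof -
  have "tail_trace r A = (\<Sum>j\<in>Suc ` {r..<n}. eig j A)"
    using assms unfolding tail_trace_def
    by (simp add: image_Suc_atLeastLessThan atLeastLessThanSuc_atLeastAtMost)
  also have "\<dots> = (\<Sum>i\<in>{r..<n}. eig (Suc i) A)"
    by (subst sum.reindex) auto
  finally show ?thesis .
qed

lemma tail_trace_nonneg:
  assumes "psd A" "A \<in> carrier_mat n n"
  shows "0 \<le> tail_trace r A"
  unfolding tail_trace_eq_sum[OF assms(2)] using psd_eig_nonneg[OF assms] by (intro sum_nonneg) auto

lemma psd_hadamard_quad_form_le: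
  assumes A: "A \<in> carrier_mat n n" "psd A" and B: "B \<in> carrier_mat n n" "psd B"
    and U: "eigendecomp n A U (\<lambda>i. eig (Suc i) A)" and V: "eigendecomp n B V (\<lambda>j. eig (Suc j) B)"
    and orth: "\<And>i j. i < k \<Longrightarrow> j < h \<Longrightarrow> cinner n (\<lambda>q. U $$ (q, i) * V $$ (q, j)) x = 0"
  shows "Re (quad_form n (hadamard A B) x) \<le> (eig 1 A * tail_trace h B + eig 1 B * tail_trace k A) * sqnorm n x"
proof -
  have weights: "0 \<le> eig (Suc i) M \<and> eig (Suc i) M \<le> eig (Suc 0) M"
    if "M \<in> carrier_mat n n" "psd M" "i < n" for M i
    using psd_eig_nonneg[OF that(2,1,3)] eig_antimono[OF that(1) _ that(3), of 0] by simp
  have "Re (quad_form n (hadamard A B) x) = (\<Sum>(i, j)\<in>{..<n} \<times> {..<n}.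
      eig (Suc i) A * eig (Suc j) B * (cmod (cinner n (\<lambda>q. U $$ (q, i) * V $$ (q, j)) x))\<^sup>2)"
    unfolding quad_form_hadamard[OF A(1) U V] by simp
  also have "\<dots> \<le> (eig (Suc 0) A * (\<Sum>j\<in>{h..<n}. eig (Suc j) B)
      + eig (Suc 0) B * (\<Sum>i\<in>{k..<n}. eig (Suc i) A)) * sqnorm n x"
    using U V unfolding eigendecomp_def
    by (intro weighted_sum_sq_cinner_hadamard_le weights[OF A] weights[OF B] orth) auto
  finally show ?thesis by (simp add: tail_trace_eq_sum[OF A(1)] tail_trace_eq_sum[OF B(1)])
qed

lemma mult_add_less_mult:
  fixes i j k h :: nat
  assumes "i < k" "j < h"
  shows "i * h + j < k * h"
proof -
  have "i * h + j < (i + 1) * h" using assms(2) by simp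
  also have "\<dots> \<le> k * h" using assms(1) by (intro mult_right_mono) auto
  finally show ?thesis .
qed

theorem mainTheorem7:
  fixes A B :: "complex mat" and n k h :: nat
  assumes "A \<in> carrier_mat n n" and "B \<in> carrier_mat n n"
    and "psd A" and "psd B"
    and "k \<ge> 1" and "h \<ge> 1" and "k * h + 1 \<le> n"
  shows "eig (k * h + 1) (hadamard A B)
    \<le> eig 1 B * tail_trace k A + eig 1 A * tail_trace h B + tail_trace k A * tail_trace h B"
proof -
  note A = assms(1,3) and B = assms(2,4)
  have hA: "hermitian A" and hB: "hermitian B" using assms(3,4) unfolding psd_def by auto
  obtain U where U: "eigendecomp n A U (\<lambda>i. eig (Suc i) A)" using hermitian_eigendecomp[OF A(1) hA] .
  obtain V where V: "eigendecomp n B V (\<lambda>j. eig (Suc j) B)" using hermitian_eigendecomp[OF B(1) hB] .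
  have C: "hadamard A B \<in> carrier_mat n n" "hermitian (hadamard A B)"
    using hadamard_carrier[OF A(1)] hermitian_hadamard[OF A(1) hA B(1) hB] by auto
  \<comment> \<open>The constraints for i < k, j < h are enumerated by r = i * h + j.\<close>
  obtain x where x: "0 < sqnorm n x"
    and orth: "\<forall>r<k * h. cinner n (\<lambda>q. U $$ (q, r div h) * V $$ (q, r mod h)) x = 0"
    and lower: "eig (Suc (k * h)) (hadamard A B) * sqnorm n x \<le> Re (quad_form n (hadamard A B) x)"
    using hermitian_exists_orthogonal_rayleigh[OF C, of "k * h" "\<lambda>r q. U $$ (q, r div h) * V $$ (q, r mod h)"]
      assms(7) by auto
  have "cinner n (\<lambda>q. U $$ (q, i) * V $$ (q, j)) x = 0" if "i < k" "j < h" for i j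
    using orth mult_add_less_mult[OF that] that(2) by auto
  from psd_hadamard_quad_form_le[OF A B U V this] lower x
  have "eig (Suc (k * h)) (hadamard A B) \<le> eig 1 A * tail_trace h B + eig 1 B * tail_trace k A"
    by (meson mult_le_cancel_right_pos order_trans)
  moreover have "0 \<le> tail_trace k A * tail_trace h B"
    using tail_trace_nonneg[OF assms(3,1)] tail_trace_nonneg[OF assms(4,2)] by simp
  ultimately show ?thesis by simp
qed

end
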